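(* Let $G=(\mathcal V,\mathcal E)$ with $|\mathcal V|=n$, $\chi=\{0,\dots,d-1\}$, $C$, $2\le m\le n$ and $\mathbb L_m$ be as in the context, let $\mathcal V_m$ be the set of vertices of $\mathbb L_m$, $\mathcal V_m^*$ the set of vertices minimizing $\langle C,\cdot\rangle$ over $\mathbb L_m$, and $\Delta=\min_{V_1\in\mathcal V_m\setminus\mathcal V_m^*,\,V_2\in\mathcal V_m^*}(\langle C,V_1\rangle-\langle C,V_2\rangle)$. If $\mathbb L_m$ is tight, $|\mathcal V_m^*|=1$, and $\eta\ge\frac{\log(8mn^md^m)+2mn^md^m}{\Delta}$, then the assignment $x_i=\arg\max_{x'\in\chi}(\Gamma^*_\eta)_i(x')$, $i\in\mathcal V$, is a MAP assignment, i.e. it maximizes $\sum_{i}\theta_i(x_i)+\sum_{ij\in\mathcal E}\theta_{ij}(x_i,x_j)$ over $\chi^n$.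
   Context: A pairwise graphical model has vertex set $\mathcal V=\{1,\dots,n\}$, edge set $\mathcal E$ (each vertex lies on at least one edge), state set $\chi=\{0,\dots,d-1\}$, potentials $\theta_i:\chi\to\mathbb R$, $\theta_{ij}:\chi^2\to\mathbb R$, and cost $C=-\theta$. For $2\le m\le n$, the Sherali–Adams polytope $\mathbb L_m$ is the set of collections $\Gamma=(\Gamma_S)_{S\subseteq\mathcal V,1\le|S|\le m}$ of nonnegative functions $\Gamma_S:\chi^S\to[0,\infty)$ each summing to $1$, such that for $S\subset T$ the marginal of $\Gamma_T$ on $S$ is $\Gamma_S$; $\Gamma_i=\Gamma_{\{i\}}$, $\Gamma_{ij}=\Gamma_{\{i,j\}}$. $C$ is extended by $0$ on subsets that are neither singletons nor edges and $\langle C,\Gamma\rangle=\sum_i\sum_xC_i(x)\Gamma_i(x)+\sum_{ij\in\mathcal E}\sum_{x_i,x_j}C_{ij}(x_i,x_j)\Gamma_{ij}(x_i,x_j)$. $H(\Gamma)=\sum\Gamma(-\log\Gamma+1)$ summed over all entries, and $\Gamma^*_\eta=\arg\min_{\Gamma\in\mathbb L_m}\langle C,\Gamma\rangle-\frac1\eta H(\Gamma)$. $\mathbb L_m$ is tight if $\max_{\Gamma\in\mathbb L_m}\langle\theta,\Gamma\rangle$ has an integral optimal solution. *)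

theory Defs
  imports "HOL-Library.FuncSet" Complex_Main
begin

text \<open>Vertices are 1..n, states are 0..d-1. A pseudo-marginal collection Gamma is a
function from (vertex subset S, assignment y on S) to reals; assignments are
extensional functions in PiE S chi.  Entries outside the index set are 0,
so that the Sherali-Adams polytope is a set of points in a real vector space.\<close>

type_synonym gam = "nat set \<Rightarrow> (nat \<Rightarrow> nat) \<Rightarrow> real"

definition verts :: "nat \<Rightarrow> nat set" where
  "verts n = {1..n}"

definition states :: "nat \<Rightarrow> nat set" where
  "states d = {..<d}"

definition asg :: "nat \<Rightarrow> nat set \<Rightarrow> (nat \<Rightarrow> nat) set" where
  "asg d S = PiE S (\<lambda>_. states d)"

definition sa_index :: "nat \<Rightarrow> nat \<Rightarrow> nat set set" where
  "sa_index n m = {S. S \<subseteq> verts n \<and> 1 \<le> card S \<and> card S \<le> m}"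

definition SA_polytope :: "nat \<Rightarrow> nat \<Rightarrow> nat \<Rightarrow> gam set" where
  "SA_polytope n d m = {\<Gamma>.
     (\<forall>S y. \<Gamma> S y \<noteq> 0 \<longrightarrow> S \<in> sa_index n m \<and> y \<in> asg d S) \<and>
     (\<forall>S\<in>sa_index n m. (\<forall>y\<in>asg d S. 0 \<le> \<Gamma> S y) \<and> (\<Sum>y\<in>asg d S. \<Gamma> S y) = 1) \<and>
     (\<forall>S\<in>sa_index n m. \<forall>T\<in>sa_index n m. S \<subset> T \<longrightarrow>
        (\<forall>y\<in>asg d S. \<Gamma> S y = (\<Sum>z\<in>{z\<in>asg d T. restrict z S = y}. \<Gamma> T z)))}"

text \<open>Pairing of the potential theta = (th1, th2) with Gamma; th1 i x = theta_i(x),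
th2 i j x y = theta_ij(x,y). Edges are pairs (i,j) with i<j.\<close>

definition theta_pair ::
  "nat \<Rightarrow> nat \<Rightarrow> (nat \<times> nat) set \<Rightarrow> (nat \<Rightarrow> nat \<Rightarrow> real) \<Rightarrow> (nat \<Rightarrow> nat \<Rightarrow> nat \<Rightarrow> nat \<Rightarrow> real)
     \<Rightarrow> gam \<Rightarrow> real" where
  "theta_pair n d E th1 th2 \<Gamma> =
     (\<Sum>i\<in>verts n. \<Sum>x\<in>states d. th1 i x * \<Gamma> {i} (\<lambda>k\<in>{i}. x)) +
     (\<Sum>(i,j)\<in>E. \<Sum>y\<in>asg d {i,j}. th2 i j (y i) (y j) * \<Gamma> {i,j} y)"

definition cost_pair ::
  "nat \<Rightarrow> nat \<Rightarrow> (nat \<times> nat) set \<Rightarrow> (nat \<Rightarrow> nat \<Rightarrow> real) \<Rightarrow> (nat \<Rightarrow> nat \<Rightarrow> nat \<Rightarrow> nat \<Rightarrow> real)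
     \<Rightarrow> gam \<Rightarrow> real" where
  "cost_pair n d E th1 th2 \<Gamma> = - theta_pair n d E th1 th2 \<Gamma>"

text \<open>Entropy H(Gamma) = sum Gamma(-log Gamma + 1) (with ln 0 = 0, i.e. 0 log 0 = 0).\<close>
definition entropy :: "nat \<Rightarrow> nat \<Rightarrow> nat \<Rightarrow> gam \<Rightarrow> real" where
  "entropy n d m \<Gamma> =
     (\<Sum>S\<in>sa_index n m. \<Sum>y\<in>asg d S. \<Gamma> S y * (- ln (\<Gamma> S y) + 1))"

definition is_vertex :: "gam set \<Rightarrow> gam \<Rightarrow> bool" where
  "is_vertex P V \<longleftrightarrow> V \<in> P \<and>
     (\<forall>a\<in>P. \<forall>b\<in>P. \<forall>t::real. 0 < t \<and> t < 1 \<and>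
        (\<forall>S y. V S y = t * a S y + (1 - t) * b S y) \<longrightarrow> a = V \<and> b = V)"

definition integral_gam :: "gam \<Rightarrow> bool" where
  "integral_gam \<Gamma> \<longleftrightarrow> (\<forall>S y. \<Gamma> S y \<in> \<int>)"

definition SA_tight ::
  "nat \<Rightarrow> nat \<Rightarrow> nat \<Rightarrow> (nat \<times> nat) set \<Rightarrow> (nat \<Rightarrow> nat \<Rightarrow> real) \<Rightarrow> (nat \<Rightarrow> nat \<Rightarrow> nat \<Rightarrow> nat \<Rightarrow> real) \<Rightarrow> bool" where
  "SA_tight n d m E th1 th2 \<longleftrightarrow>
     (\<exists>\<Gamma>\<in>SA_polytope n d m. integral_gam \<Gamma> \<and>
        (\<forall>\<Gamma>'\<in>SA_polytope n d m. theta_pair n d E th1 th2 \<Gamma>' \<le> theta_pair n d E th1 th2 \<Gamma>))"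

definition score ::
  "nat \<Rightarrow> (nat \<times> nat) set \<Rightarrow> (nat \<Rightarrow> nat \<Rightarrow> real) \<Rightarrow> (nat \<Rightarrow> nat \<Rightarrow> nat \<Rightarrow> nat \<Rightarrow> real)
     \<Rightarrow> (nat \<Rightarrow> nat) \<Rightarrow> real" where
  "score n E th1 th2 x = (\<Sum>i\<in>verts n. th1 i (x i)) + (\<Sum>(i,j)\<in>E. th2 i j (x i) (x j))"

definition is_MAP ::
  "nat \<Rightarrow> nat \<Rightarrow> (nat \<times> nat) set \<Rightarrow> (nat \<Rightarrow> nat \<Rightarrow> real) \<Rightarrow> (nat \<Rightarrow> nat \<Rightarrow> nat \<Rightarrow> nat \<Rightarrow> real)
     \<Rightarrow> (nat \<Rightarrow> nat) \<Rightarrow> bool" where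
  "is_MAP n d E th1 th2 x \<longleftrightarrow> (\<forall>i\<in>verts n. x i \<in> states d) \<and>
     (\<forall>x'. (\<forall>i\<in>verts n. x' i \<in> states d) \<longrightarrow> score n E th1 th2 x' \<le> score n E th1 th2 x)"

end

theory Submission
  imports Defs
begin

text \<open>Tightness yields an integral maximiser of \<open>\<langle>\<theta>,\<cdot>\<rangle>\<close> over \<open>\<L>\<^sub>m\<close>; it is the
  indicator \<open>V\<^sub>0\<close> of a MAP assignment \<open>x\<^sub>0\<close> and, being a vertex, the unique optimal vertex.
  An affine functional that is nonnegative at the (finitely many) vertices of \<open>\<L>\<^sub>m\<close> is
  nonnegative on \<open>\<L>\<^sub>m\<close>; applied to
  \<open>\<Gamma> \<mapsto> (\<langle>C,\<Gamma>\<rangle> - \<langle>C,V\<^sub>0\<rangle>) / \<Delta> - (1 - \<Gamma>\<^sub>i(x\<^sub>0 i))\<close> it bounds the missing mass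
  of \<open>\<Gamma>\<^sub>i\<close> at \<open>x\<^sub>0 i\<close> by the suboptimality gap over \<open>\<Delta>\<close>. For the entropic minimiser
  this gap is at most \<open>(H(\<Gamma>\<^sup>*\<^sub>\<eta>) - H(V\<^sub>0)) / \<eta> \<le> m n\<^sup>m d\<^sup>m / \<eta>\<close>, so the bound on \<open>\<eta>\<close>
  leaves mass more than \<open>1/2\<close> at \<open>x\<^sub>0 i\<close>, which is therefore the arg max.\<close>

section \<open>The Sherali--Adams polytope\<close>

lemma finite_sa_index: "finite (sa_index n m)"
  by (rule finite_subset[of _ "Pow (verts n)"]) (auto simp: sa_index_def verts_def)

lemma finite_of_mem_sa_index: "S \<in> sa_index n m \<Longrightarrow> finite S"
  unfolding sa_index_def verts_def
  by (metis (mono_tags) finite_atLeastAtMost finite_subset mem_Collect_eq)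

lemma card_asg: "finite S \<Longrightarrow> card (asg d S) = d ^ card S"
  by (simp add: asg_def states_def card_PiE)

lemma finite_asg_sa_index: "S \<in> sa_index n m \<Longrightarrow> finite (asg d S)"
  by (simp add: asg_def states_def finite_PiE finite_of_mem_sa_index)

lemma restrict_in_asg:
  "\<forall>i\<in>verts n. z i \<in> states d \<Longrightarrow> S \<in> sa_index n m \<Longrightarrow> restrict z S \<in> asg d S"
  unfolding asg_def sa_index_def by (auto simp: restrict_PiE_iff)

lemma singleton_in_sa_index: "i \<in> verts n \<Longrightarrow> 1 \<le> m \<Longrightarrow> {i} \<in> sa_index n m"
  by (simp add: sa_index_def)

lemma SA_polytope_memD:
  assumes "G \<in> SA_polytope n d m"
  shows "(\<forall>S y. G S y \<noteq> 0 \<longrightarrow> S \<in> sa_index n m \<and> y \<in> asg d S) \<and>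
    (\<forall>S\<in>sa_index n m. (\<forall>y\<in>asg d S. 0 \<le> G S y) \<and> (\<Sum>y\<in>asg d S. G S y) = 1) \<and>
    (\<forall>S\<in>sa_index n m. \<forall>T\<in>sa_index n m. S \<subset> T \<longrightarrow>
        (\<forall>y\<in>asg d S. G S y = (\<Sum>z\<in>{z\<in>asg d T. restrict z S = y}. G T z)))"
  using assms unfolding SA_polytope_def mem_Collect_eq .

lemma SA_polytope_support:
  "G \<in> SA_polytope n d m \<Longrightarrow> G S y \<noteq> 0 \<Longrightarrow> S \<in> sa_index n m \<and> y \<in> asg d S"
  using SA_polytope_memD by metis

lemma SA_polytope_sum:
  "G \<in> SA_polytope n d m \<Longrightarrow> S \<in> sa_index n m \<Longrightarrow> (\<Sum>y\<in>asg d S. G S y) = 1"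
  using SA_polytope_memD by metis

lemma SA_polytope_marginal:
  assumes "G \<in> SA_polytope n d m" "S \<in> sa_index n m" "T \<in> sa_index n m" "S \<subset> T" "y \<in> asg d S"
  shows "G S y = (\<Sum>z\<in>{z\<in>asg d T. restrict z S = y}. G T z)"
  using SA_polytope_memD[OF assms(1)] assms(2-5) by (elim conjE) meson

lemma SA_polytope_nonneg:
  assumes G: "G \<in> SA_polytope n d m" shows "0 \<le> G S y"
proof (cases "G S y = 0")
  case False
  then show ?thesis using SA_polytope_memD[OF G] by (elim conjE) meson
qed simp

lemma SA_polytope_le_1:
  assumes G: "G \<in> SA_polytope n d m" shows "G S y \<le> 1"
proof (cases "G S y = 0")
  case False
  then have S: "S \<in> sa_index n m" "y \<in> asg d S" using SA_polytope_support[OF G] by auto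
  have "G S y \<le> (\<Sum>y\<in>asg d S. G S y)"
    using S finite_asg_sa_index SA_polytope_nonneg[OF G] by (intro member_le_sum) auto
  then show ?thesis using SA_polytope_sum[OF G S(1)] by simp
qed simp

lemma SA_polytope_marginal_of_one:
  assumes G: "G \<in> SA_polytope n d m" and S: "S \<in> sa_index n m" and T: "T \<in> sa_index n m"
    and ST: "S \<subset> T" and z: "z \<in> asg d T" and one: "G T z = 1"
  shows "G S (restrict z S) = 1"
proof -
  have "restrict z S \<in> asg d S"
    using z ST unfolding asg_def by (auto simp: PiE_iff)
  then have "G S (restrict z S) = (\<Sum>w\<in>{w\<in>asg d T. restrict w S = restrict z S}. G T w)"
    by (rule SA_polytope_marginal[OF G S T ST])
  also have "\<dots> \<ge> G T z"
    using z finite_asg_sa_index[OF T] SA_polytope_nonneg[OF G] by (intro member_le_sum) auto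
  finally show ?thesis using one SA_polytope_le_1[OF G, of S "restrict z S"] by linarith
qed

section \<open>Vertices and affine functionals\<close>

definition gam_shift :: "gam \<Rightarrow> gam \<Rightarrow> gam \<Rightarrow> real \<Rightarrow> gam" where
  "gam_shift G a b s = (\<lambda>S y. G S y + s * (a S y - b S y))"

definition gam_support :: "gam \<Rightarrow> (nat set \<times> (nat \<Rightarrow> nat)) set" where
  "gam_support G = {(S, y). G S y \<noteq> 0}"

definition gam_affine :: "(gam \<Rightarrow> real) \<Rightarrow> bool" where
  "gam_affine f \<longleftrightarrow> (\<forall>G a b s. f (gam_shift G a b s) = f G + s * (f a - f b))"

lemma gam_affine_cost_pair: "gam_affine (cost_pair n d E th1 th2)"
  unfolding gam_affine_def cost_pair_def theta_pair_def gam_shift_def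
  by (simp add: algebra_simps sum.distrib sum_subtractf sum_distrib_left case_prod_beta)

lemma finite_gam_support:
  assumes "G \<in> SA_polytope n d m" shows "finite (gam_support G)"
proof (rule finite_subset)
  show "gam_support G \<subseteq> Sigma (sa_index n m) (asg d)"
    using SA_polytope_support[OF assms] by (auto simp: gam_support_def)
  show "finite (Sigma (sa_index n m) (asg d))"
    by (rule finite_SigmaI[OF finite_sa_index finite_asg_sa_index])
qed

lemma gam_shift_in_SA_polytope:
  assumes G: "G \<in> SA_polytope n d m" and a: "a \<in> SA_polytope n d m" and b: "b \<in> SA_polytope n d m"
    and nonneg: "\<And>S y. 0 \<le> gam_shift G a b s S y"
  shows "gam_shift G a b s \<in> SA_polytope n d m"
proof -
  let ?H = "gam_shift G a b s"
  have support: "S \<in> sa_index n m \<and> y \<in> asg d S" if "?H S y \<noteq> 0" for S y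
  proof -
    have "G S y \<noteq> 0 \<or> a S y \<noteq> 0 \<or> b S y \<noteq> 0" using that by (auto simp: gam_shift_def)
    then show ?thesis using SA_polytope_support G a b by blast
  qed
  have sum: "(\<Sum>y\<in>asg d S. ?H S y) = 1" if "S \<in> sa_index n m" for S
    using SA_polytope_sum[OF G that] SA_polytope_sum[OF a that] SA_polytope_sum[OF b that]
    by (simp add: gam_shift_def sum.distrib sum_subtractf sum_distrib_left[symmetric])
  have marginal: "?H S y = (\<Sum>z\<in>{z\<in>asg d T. restrict z S = y}. ?H T z)"
    if "S \<in> sa_index n m" "T \<in> sa_index n m" "S \<subset> T" "y \<in> asg d S" for S T y
    using SA_polytope_marginal[OF G that] SA_polytope_marginal[OF a that]
      SA_polytope_marginal[OF b that]
    by (simp add: gam_shift_def sum.distrib sum_subtractf sum_distrib_left[symmetric])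
  show ?thesis
    unfolding SA_polytope_def mem_Collect_eq
  proof (intro conjI)
    show "\<forall>S\<in>sa_index n m. (\<forall>y\<in>asg d S. 0 \<le> ?H S y) \<and> (\<Sum>y\<in>asg d S. ?H S y) = 1"
      using nonneg sum by simp
    show "\<forall>S\<in>sa_index n m. \<forall>T\<in>sa_index n m. S \<subset> T \<longrightarrow>
        (\<forall>y\<in>asg d S. ?H S y = (\<Sum>z\<in>{z\<in>asg d T. restrict z S = y}. ?H T z))"
      using marginal by simp
  qed (use support in blast)
qed

lemma sum_eq_0_has_neg_and_pos:
  fixes g :: "'a \<Rightarrow> real"
  assumes fin: "finite A" and zero: "sum g A = 0" and x: "x \<in> A" "g x \<noteq> 0"
  shows "(\<exists>y\<in>A. g y < 0) \<and> (\<exists>y\<in>A. g y > 0)"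
proof -
  have "\<not> (\<forall>y\<in>A. 0 \<le> g y)"
    using sum_nonneg_eq_0_iff[OF fin, of g] zero x by blast
  moreover have "\<not> (\<forall>y\<in>A. 0 \<le> - g y)"
    using sum_nonneg_eq_0_iff[OF fin, of "\<lambda>y. - g y"] zero x by (auto simp: sum_negf)
  ultimately show ?thesis by (auto simp: not_le)
qed

text \<open>The step size is the ratio test of the simplex method: the largest \<open>s\<close> keeping
  \<open>G + s (a - b)\<close> nonnegative, at which some support coordinate drops to zero.\<close>

lemma shift_reduces_support:
  assumes G: "G \<in> SA_polytope n d m" and a: "a \<in> SA_polytope n d m" and b: "b \<in> SA_polytope n d m"
    and off_support: "\<And>S y. G S y = 0 \<Longrightarrow> a S y = b S y"
    and lt: "a S0 y0 < b S0 y0"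
  shows "\<exists>s>0. gam_shift G a b s \<in> SA_polytope n d m
           \<and> card (gam_support (gam_shift G a b s)) < card (gam_support G)"
proof -
  define N where "N = {e \<in> gam_support G. a (fst e) (snd e) < b (fst e) (snd e)}"
  define r where "r e = G (fst e) (snd e) / (b (fst e) (snd e) - a (fst e) (snd e))" for e
  have finN: "finite N" using finite_gam_support[OF G] by (simp add: N_def)
  have "(S0, y0) \<in> N" using off_support lt by (force simp: N_def gam_support_def)
  define s where "s = Min (r ` N)"
  have "s \<in> r ` N" unfolding s_def using finN \<open>(S0, y0) \<in> N\<close> by (intro Min_in) auto
  then obtain e1 where e1: "e1 \<in> N" "s = r e1" by auto
  have G_pos: "G S y > 0" if "(S, y) \<in> gam_support G" for S y
    using that SA_polytope_nonneg[OF G, of S y] by (auto simp: gam_support_def)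
  have s_pos: "s > 0" using e1 G_pos[of "fst e1" "snd e1"] by (auto simp: N_def r_def)
  have nonneg: "0 \<le> gam_shift G a b s S y" for S y
  proof (cases "a S y < b S y")
    case True
    then have "(S, y) \<in> N" using off_support by (force simp: N_def gam_support_def)
    then have "s \<le> r (S, y)" unfolding s_def using finN by simp
    then have "s \<le> G S y / (b S y - a S y)" by (simp add: r_def)
    then have "s * (b S y - a S y) \<le> G S y" using True by (simp add: pos_le_divide_eq)
    then show ?thesis by (simp add: gam_shift_def algebra_simps)
  next
    case False
    then show ?thesis using s_pos SA_polytope_nonneg[OF G, of S y] by (simp add: gam_shift_def)
  qed
  have "gam_support (gam_shift G a b s) \<subseteq> gam_support G"
    using off_support by (auto simp: gam_support_def gam_shift_def)
  moreover have "e1 \<in> gam_support G - gam_support (gam_shift G a b s)"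
    using e1 by (auto simp: N_def r_def gam_support_def gam_shift_def field_simps)
  ultimately have "gam_support (gam_shift G a b s) \<subset> gam_support G" by blast
  then have "card (gam_support (gam_shift G a b s)) < card (gam_support G)"
    by (rule psubset_card_mono[OF finite_gam_support[OF G]])
  then show ?thesis using gam_shift_in_SA_polytope[OF G a b nonneg] s_pos by blast
qed

lemma shifts_both_ways_reduce_support:
  assumes G: "G \<in> SA_polytope n d m" and a: "a \<in> SA_polytope n d m" and b: "b \<in> SA_polytope n d m"
    and off_support: "\<And>S y. G S y = 0 \<Longrightarrow> a S y = b S y" and "a \<noteq> b"
  obtains s1 s2 where "s1 > 0" "gam_shift G a b s1 \<in> SA_polytope n d m"
      "card (gam_support (gam_shift G a b s1)) < card (gam_support G)"
    and "s2 > 0" "gam_shift G b a s2 \<in> SA_polytope n d m"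
      "card (gam_support (gam_shift G b a s2)) < card (gam_support G)"
proof -
  obtain S y where ne: "a S y \<noteq> b S y" using \<open>a \<noteq> b\<close> by (meson ext)
  then have S: "S \<in> sa_index n m" "y \<in> asg d S" using SA_polytope_support a b by metis+
  have "(\<Sum>y\<in>asg d S. a S y - b S y) = 0"
    using SA_polytope_sum[OF a S(1)] SA_polytope_sum[OF b S(1)] by (simp add: sum_subtractf)
  from sum_eq_0_has_neg_and_pos[OF finite_asg_sa_index[OF S(1)] this S(2)] ne
  obtain y1 y2 where "a S y1 < b S y1" "b S y2 < a S y2" by auto
  have off_support': "\<And>S y. G S y = 0 \<Longrightarrow> b S y = a S y" using off_support by metis
  obtain s1 where "s1 > 0" "gam_shift G a b s1 \<in> SA_polytope n d m"
      "card (gam_support (gam_shift G a b s1)) < card (gam_support G)"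
    using shift_reduces_support[of G n d m a b S y1] G a b off_support \<open>a S y1 < b S y1\<close> by blast
  moreover obtain s2 where "s2 > 0" "gam_shift G b a s2 \<in> SA_polytope n d m"
      "card (gam_support (gam_shift G b a s2)) < card (gam_support G)"
    using shift_reduces_support[of G n d m b a S y2] G a b off_support' \<open>b S y2 < a S y2\<close> by blast
  ultimately show ?thesis by (rule that)
qed

lemma is_vertexD:
  assumes "is_vertex P V" "a \<in> P" "b \<in> P" "0 < t" "t < 1"
    and "\<And>S y. V S y = t * a S y + (1 - t) * b S y"
  shows "a = V \<and> b = V"
  using assms unfolding is_vertex_def by blast

lemma is_vertex_imp_mem: "is_vertex P V \<Longrightarrow> V \<in> P"
  by (simp add: is_vertex_def)

lemma not_vertex_if_shiftable:
  assumes G: "G \<in> SA_polytope n d m" and a: "a \<in> SA_polytope n d m" and b: "b \<in> SA_polytope n d m"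
    and off_support: "\<And>S y. G S y = 0 \<Longrightarrow> a S y = b S y" and "a \<noteq> b"
  shows "\<not> is_vertex (SA_polytope n d m) G"
proof
  assume vertex: "is_vertex (SA_polytope n d m) G"
  obtain s1 s2 where s1: "s1 > 0" "gam_shift G a b s1 \<in> SA_polytope n d m"
      "card (gam_support (gam_shift G a b s1)) < card (gam_support G)"
    and s2: "s2 > 0" "gam_shift G b a s2 \<in> SA_polytope n d m"
    by (rule shifts_both_ways_reduce_support[OF G a b off_support \<open>a \<noteq> b\<close>])
  define t where "t = s2 / (s1 + s2)"
  have t: "0 < t" "t < 1" using s1 s2 by (auto simp: t_def field_simps)
  have balance: "t * s1 - (1 - t) * s2 = 0" using s1 s2 by (simp add: t_def field_simps)
  have "G S y = t * gam_shift G a b s1 S y + (1 - t) * gam_shift G b a s2 S y" for S y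
  proof -
    have "t * gam_shift G a b s1 S y + (1 - t) * gam_shift G b a s2 S y
        = G S y + (t * s1 - (1 - t) * s2) * (a S y - b S y)"
      by (simp add: gam_shift_def algebra_simps)
    then show ?thesis using balance by simp
  qed
  then have "gam_shift G a b s1 = G" using is_vertexD[OF vertex s1(2) s2(2) t] by blast
  with s1(3) show False by simp
qed

lemma vertex_eq_if_same_support:
  assumes V: "is_vertex (SA_polytope n d m) V" and W: "is_vertex (SA_polytope n d m) W"
    and same: "gam_support V = gam_support W"
  shows "V = W"
proof (rule ccontr)
  assume "V \<noteq> W"
  have "V S y = W S y" if "V S y = 0" for S y
    using same that by (auto simp: gam_support_def set_eq_iff)
  with not_vertex_if_shiftable[OF is_vertex_imp_mem[OF V] is_vertex_imp_mem[OF V]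
      is_vertex_imp_mem[OF W]] \<open>V \<noteq> W\<close> V
  show False by blast
qed

lemma finite_vertices: "finite {V. is_vertex (SA_polytope n d m) V}"
proof (rule inj_on_finite[where f = gam_support])
  show "inj_on gam_support {V. is_vertex (SA_polytope n d m) V}"
    by (rule inj_onI) (use vertex_eq_if_same_support in blast)
  show "gam_support ` {V. is_vertex (SA_polytope n d m) V} \<subseteq> Pow (Sigma (sa_index n m) (asg d))"
    using SA_polytope_support[OF is_vertex_imp_mem] by (auto simp: gam_support_def)
  show "finite (Pow (Sigma (sa_index n m) (asg d)))"
    by (simp add: finite_SigmaI[OF finite_sa_index finite_asg_sa_index])
qed

lemma not_vertex_obtains_direction:
  assumes G: "G \<in> SA_polytope n d m" and "\<not> is_vertex (SA_polytope n d m) G"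
  obtains a b where "a \<in> SA_polytope n d m" "b \<in> SA_polytope n d m" "a \<noteq> b"
    "\<And>S y. G S y = 0 \<Longrightarrow> a S y = b S y"
proof -
  obtain a b t where a: "a \<in> SA_polytope n d m" and b: "b \<in> SA_polytope n d m"
    and t: "0 < t" "t < 1" and comb: "\<And>S y. G S y = t * a S y + (1 - t) * b S y"
    and not_both: "\<not> (a = G \<and> b = G)"
    using assms unfolding is_vertex_def by blast
  have "a \<noteq> b"
  proof
    assume "a = b"
    then have "G = a" using comb by (auto simp: algebra_simps)
    with not_both \<open>a = b\<close> show False by simp
  qed
  moreover have "a S y = b S y" if "G S y = 0" for S y
  proof -
    have "0 \<le> t * a S y" "0 \<le> (1 - t) * b S y"
      using SA_polytope_nonneg[OF a] SA_polytope_nonneg[OF b] t by auto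
    then have "t * a S y = 0" "(1 - t) * b S y = 0" using comb[of S y] that by linarith+
    then show ?thesis using t by simp
  qed
  ultimately show ?thesis using that a b by blast
qed

text \<open>A discrete Krein--Milman argument: at a non-vertex, moving along a direction that
  vanishes off the support in both senses reaches points of smaller support, of which the
  original point is a convex combination.\<close>

lemma nonneg_on_vertices_imp_nonneg:
  assumes aff: "gam_affine f"
    and vertices: "\<And>V. is_vertex (SA_polytope n d m) V \<Longrightarrow> 0 \<le> f V"
    and "G \<in> SA_polytope n d m"
  shows "0 \<le> f G"
  using \<open>G \<in> SA_polytope n d m\<close>
proof (induction "card (gam_support G)" arbitrary: G rule: less_induct)
  case (less G)
  show ?case
  proof (cases "is_vertex (SA_polytope n d m) G")
    case False
    then obtain a b where a: "a \<in> SA_polytope n d m" and b: "b \<in> SA_polytope n d m"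
      and "a \<noteq> b" and off_support: "\<And>S y. G S y = 0 \<Longrightarrow> a S y = b S y"
      using not_vertex_obtains_direction[OF less.prems] by metis
    obtain s1 s2 where s1: "s1 > 0" "gam_shift G a b s1 \<in> SA_polytope n d m"
        "card (gam_support (gam_shift G a b s1)) < card (gam_support G)"
      and s2: "s2 > 0" "gam_shift G b a s2 \<in> SA_polytope n d m"
        "card (gam_support (gam_shift G b a s2)) < card (gam_support G)"
      by (rule shifts_both_ways_reduce_support[OF less.prems a b off_support \<open>a \<noteq> b\<close>])
    have shift1: "f (gam_shift G a b s1) = f G + s1 * (f a - f b)"
      and shift2: "f (gam_shift G b a s2) = f G + s2 * (f b - f a)"
      using aff unfolding gam_affine_def by blast+
    have "(s1 + s2) * f G = s2 * f (gam_shift G a b s1) + s1 * f (gam_shift G b a s2)"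
      unfolding shift1 shift2 by (simp add: algebra_simps)
    also have "\<dots> \<ge> 0" using less.hyps s1 s2 by simp
    finally show ?thesis using s1 s2 by (simp add: zero_le_mult_iff)
  qed (rule vertices)
qed

section \<open>Integral points and assignments\<close>

definition assignment_gam :: "nat \<Rightarrow> nat \<Rightarrow> (nat \<Rightarrow> nat) \<Rightarrow> gam" where
  "assignment_gam n m z = (\<lambda>S y. if S \<in> sa_index n m \<and> y = restrict z S then 1 else 0)"

lemma singleton_assignment_eq_restrict_iff: "((\<lambda>k\<in>{i}. v) = restrict z {i}) \<longleftrightarrow> v = z i"
  by (metis restrict_apply' restrict_ext singletonD singletonI)

lemma assignment_gam_singleton:
  "i \<in> verts n \<Longrightarrow> 1 \<le> m \<Longrightarrow> assignment_gam n m z {i} (\<lambda>k\<in>{i}. z i) = 1"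
  by (simp add: assignment_gam_def singleton_in_sa_index singleton_assignment_eq_restrict_iff)

lemma assignment_gam_in_SA_polytope:
  assumes z: "\<forall>i\<in>verts n. z i \<in> states d"
  shows "assignment_gam n m z \<in> SA_polytope n d m"
  unfolding SA_polytope_def mem_Collect_eq
proof (intro conjI)
  show "\<forall>S y. assignment_gam n m z S y \<noteq> 0 \<longrightarrow> S \<in> sa_index n m \<and> y \<in> asg d S"
    using restrict_in_asg[OF z] by (auto simp: assignment_gam_def)
  show "\<forall>S\<in>sa_index n m. (\<forall>y\<in>asg d S. 0 \<le> assignment_gam n m z S y)
      \<and> (\<Sum>y\<in>asg d S. assignment_gam n m z S y) = 1"
    using restrict_in_asg[OF z] finite_asg_sa_index by (simp add: assignment_gam_def)
  show "\<forall>S\<in>sa_index n m. \<forall>T\<in>sa_index n m. S \<subset> T \<longrightarrow> (\<forall>y\<in>asg d S.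
      assignment_gam n m z S y = (\<Sum>w\<in>{w\<in>asg d T. restrict w S = y}. assignment_gam n m z T w))"
  proof (intro ballI impI)
    fix S T y assume S: "S \<in> sa_index n m" and T: "T \<in> sa_index n m" and "S \<subset> T"
    then have "restrict (restrict z T) S = restrict z S" by (simp add: Int_absorb1)
    then show "assignment_gam n m z S y
        = (\<Sum>w\<in>{w\<in>asg d T. restrict w S = y}. assignment_gam n m z T w)"
      using S T restrict_in_asg[OF z T] finite_asg_sa_index[OF T]
      by (auto simp: assignment_gam_def)
  qed
qed

lemma theta_pair_assignment_gam:
  assumes z: "\<forall>i\<in>verts n. z i \<in> states d"
    and edges: "E \<subseteq> {(i,j). i \<in> verts n \<and> j \<in> verts n \<and> i < j}" and "2 \<le> m"
  shows "theta_pair n d E th1 th2 (assignment_gam n m z) = score n E th1 th2 z"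
proof -
  have vertex_term: "(\<Sum>v\<in>states d. th1 i v * assignment_gam n m z {i} (\<lambda>k\<in>{i}. v)) = th1 i (z i)"
    if i: "i \<in> verts n" for i
  proof -
    have "(\<Sum>v\<in>states d. th1 i v * assignment_gam n m z {i} (\<lambda>k\<in>{i}. v))
        = (\<Sum>v\<in>states d. if v = z i then th1 i v else 0)"
      using singleton_in_sa_index[OF i] \<open>2 \<le> m\<close>
      by (intro sum.cong) (auto simp: assignment_gam_def singleton_assignment_eq_restrict_iff)
    then show ?thesis using z i by (simp add: states_def)
  qed
  have edge_term: "(\<Sum>y\<in>asg d {i,j}. th2 i j (y i) (y j) * assignment_gam n m z {i,j} y)
      = th2 i j (z i) (z j)" if "(i,j) \<in> E" for i j
  proof -
    have ij: "{i,j} \<in> sa_index n m" using that edges \<open>2 \<le> m\<close> by (auto simp: sa_index_def)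
    have "(\<Sum>y\<in>asg d {i,j}. th2 i j (y i) (y j) * assignment_gam n m z {i,j} y)
        = (\<Sum>y\<in>asg d {i,j}. if y = restrict z {i,j} then th2 i j (y i) (y j) else 0)"
      using ij by (intro sum.cong) (auto simp: assignment_gam_def)
    then show ?thesis using restrict_in_asg[OF z ij] finite_asg_sa_index[OF ij] by simp
  qed
  show ?thesis unfolding theta_pair_def score_def
    using vertex_term edge_term by (simp add: case_prod_beta)
qed

lemma integral_SA_point_zero_or_one:
  assumes G: "G \<in> SA_polytope n d m" and "integral_gam G"
  shows "G S y = 0 \<or> G S y = 1"
proof -
  obtain k :: int where k: "G S y = of_int k"
    using \<open>integral_gam G\<close> unfolding integral_gam_def by (meson Ints_cases)
  then have "0 \<le> k" "k \<le> 1" using SA_polytope_nonneg[OF G, of S y] SA_polytope_le_1[OF G, of S y] by auto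
  then show ?thesis using k by (cases "k = 0") auto
qed

lemma integral_SA_point_is_vertex:
  assumes G: "G \<in> SA_polytope n d m" and I: "integral_gam G"
  shows "is_vertex (SA_polytope n d m) G"
  unfolding is_vertex_def
proof (intro conjI ballI allI impI)
  fix a b t assume a: "a \<in> SA_polytope n d m" and b: "b \<in> SA_polytope n d m"
    and h: "0 < t \<and> t < 1 \<and> (\<forall>S y. G S y = t * a S y + (1 - t) * b S y)"
  have "a S y = G S y \<and> b S y = G S y" for S y
  proof -
    have comb: "G S y = t * a S y + (1 - t) * b S y" and t: "0 < t" "t < 1" using h by auto
    have pos: "0 \<le> t * a S y" "0 \<le> (1 - t) * b S y" "0 \<le> t * (1 - a S y)" "0 \<le> (1 - t) * (1 - b S y)"
      using t SA_polytope_nonneg[OF a] SA_polytope_le_1[OF a]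
        SA_polytope_nonneg[OF b] SA_polytope_le_1[OF b] by auto
    consider "G S y = 0" | "G S y = 1" using integral_SA_point_zero_or_one[OF G I] by blast
    then show ?thesis
    proof cases
      case 1
      then have "t * a S y = 0" "(1 - t) * b S y = 0" using comb pos by linarith+
      then show ?thesis using t 1 by simp
    next
      case 2
      have "t * (1 - a S y) + (1 - t) * (1 - b S y) = 1 - G S y"
        using comb by (simp add: algebra_simps)
      then have "t * (1 - a S y) = 0" "(1 - t) * (1 - b S y) = 0" using 2 pos by linarith+
      then show ?thesis using t 2 by simp
    qed
  qed
  then show "a = G" "b = G" by (simp_all add: fun_eq_iff)
qed (rule G)

lemma zero_one_sum_one_unique:
  fixes g :: "'a \<Rightarrow> real"
  assumes fin: "finite A" and zero_one: "\<forall>y\<in>A. g y = 0 \<or> g y = 1" and one: "sum g A = 1"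
  shows "\<exists>!y. y \<in> A \<and> g y = 1"
proof -
  have "\<exists>y\<in>A. g y \<noteq> 0" using one by (metis sum.neutral zero_neq_one)
  then have "\<exists>y. y \<in> A \<and> g y = 1" using zero_one by blast
  moreover have "y = y'" if "y \<in> A" "g y = 1" "y' \<in> A" "g y' = 1" for y y'
  proof (rule ccontr)
    assume "y \<noteq> y'"
    then have "sum g {y, y'} \<le> sum g A"
      using that zero_one by (intro sum_mono2[OF fin]) auto
    with \<open>y \<noteq> y'\<close> that one show False by simp
  qed
  ultimately show ?thesis by blast
qed

lemma SA_polytope_one_imp_eq_restrict:
  assumes G: "G \<in> SA_polytope n d m" and "1 \<le> m" and S: "S \<in> sa_index n m"
    and y: "y \<in> asg d S" "G S y = 1"
    and z: "\<And>i v. i \<in> verts n \<Longrightarrow> v \<in> states d \<Longrightarrow> G {i} (\<lambda>k\<in>{i}. v) = 1 \<Longrightarrow>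
      v = z i"
  shows "y = restrict z S"
proof (rule ext)
  fix k show "y k = restrict z S k"
  proof (cases "k \<in> S")
    case True
    then have k: "k \<in> verts n" using S by (auto simp: sa_index_def)
    have "G {k} (restrict y {k}) = 1"
    proof (cases "S = {k}")
      case True
      then show ?thesis using y by (simp add: asg_def)
    next
      case False
      then have sub: "{k} \<subset> S" using \<open>k \<in> S\<close> by blast
      show ?thesis
        using SA_polytope_marginal_of_one[of G, OF G singleton_in_sa_index[OF k \<open>1 \<le> m\<close>] S sub y] .
    qed
    moreover have "restrict y {k} = (\<lambda>j\<in>{k}. y k)" by (auto simp: fun_eq_iff)
    moreover have "y k \<in> states d" using y(1) True by (auto simp: asg_def)
    ultimately show ?thesis using z[OF k] True by simp
  next
    case False
    moreover have "y k = undefined" using y(1) False unfolding asg_def by (rule PiE_arb)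
    ultimately show ?thesis by simp
  qed
qed

lemma integral_SA_point_eq_assignment_gam:
  assumes G: "G \<in> SA_polytope n d m" and I: "integral_gam G" and "1 \<le> m"
  obtains z where "\<forall>i\<in>verts n. z i \<in> states d" "G = assignment_gam n m z"
proof -
  have unique_one: "\<exists>!y. y \<in> asg d S \<and> G S y = 1" if "S \<in> sa_index n m" for S
    using zero_one_sum_one_unique[OF finite_asg_sa_index[OF that] _ SA_polytope_sum[OF G that]]
      integral_SA_point_zero_or_one[OF G I] by blast
  have unique_state: "\<exists>!v. v \<in> states d \<and> G {i} (\<lambda>k\<in>{i}. v) = 1" if i: "i \<in> verts n" for i
  proof -
    obtain y where y: "y \<in> asg d {i}" "G {i} y = 1"
      and y_unique: "\<And>y'. y' \<in> asg d {i} \<Longrightarrow> G {i} y' = 1 \<Longrightarrow> y' = y"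
      using unique_one[OF singleton_in_sa_index[OF i \<open>1 \<le> m\<close>]] by blast
    have "y = restrict y {i}" using y(1) by (simp add: asg_def)
    also have "\<dots> = (\<lambda>k\<in>{i}. y i)" by (auto simp: fun_eq_iff)
    finally have "y = (\<lambda>k\<in>{i}. y i)" .
    moreover have "v = y i" if "v \<in> states d" "G {i} (\<lambda>k\<in>{i}. v) = 1" for v
      using y_unique[of "\<lambda>k\<in>{i}. v"] that by (auto simp: asg_def dest: fun_cong[of _ _ i])
    ultimately show ?thesis using y by (auto simp: asg_def)
  qed
  define z where "z i = (THE v. v \<in> states d \<and> G {i} (\<lambda>k\<in>{i}. v) = 1)" for i
  have z: "\<forall>i\<in>verts n. z i \<in> states d"
    using theI'[OF unique_state] by (simp add: z_def)
  have z_unique: "v = z i"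
    if "i \<in> verts n" "v \<in> states d" "G {i} (\<lambda>k\<in>{i}. v) = 1" for i v
    using the1_equality[OF unique_state[OF that(1)]] that(2,3) by (simp add: z_def)
  have one_imp_restrict: "y = restrict z S"
    if "S \<in> sa_index n m" "y \<in> asg d S" "G S y = 1" for S y
    using that z_unique by (rule SA_polytope_one_imp_eq_restrict[OF G \<open>1 \<le> m\<close>])
  have "G S y = assignment_gam n m z S y" for S y
  proof (cases "S \<in> sa_index n m \<and> y \<in> asg d S")
    case True
    then have S: "S \<in> sa_index n m" and y: "y \<in> asg d S" by auto
    obtain y1 where y1: "y1 \<in> asg d S" "G S y1 = 1" using unique_one[OF S] by blast
    have "G S (restrict z S) = 1" using y1 one_imp_restrict[OF S y1] by simp
    moreover have "G S y = 0" if "y \<noteq> restrict z S"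
    proof -
      have "G S y \<noteq> 1" using one_imp_restrict[OF S y] that by blast
      then show ?thesis using integral_SA_point_zero_or_one[OF G I, of S y] by simp
    qed
    ultimately show ?thesis using S by (auto simp: assignment_gam_def)
  next
    case False
    then show ?thesis using SA_polytope_support[OF G] restrict_in_asg[OF z]
      by (auto simp: assignment_gam_def)
  qed
  then show ?thesis using that z by blast
qed

lemma MAP_of_tight:
  assumes tight: "SA_tight n d m E th1 th2"
    and edges: "E \<subseteq> {(i,j). i \<in> verts n \<and> j \<in> verts n \<and> i < j}" and "2 \<le> m"
  obtains x0 where "is_MAP n d E th1 th2 x0"
    and "is_vertex (SA_polytope n d m) (assignment_gam n m x0)"
    and "\<forall>\<Gamma>\<in>SA_polytope n d m.
      cost_pair n d E th1 th2 (assignment_gam n m x0) \<le> cost_pair n d E th1 th2 \<Gamma>"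
proof -
  obtain G0 where G0: "G0 \<in> SA_polytope n d m" "integral_gam G0"
    and max: "\<forall>\<Gamma>\<in>SA_polytope n d m. theta_pair n d E th1 th2 \<Gamma> \<le> theta_pair n d E th1 th2 G0"
    using tight unfolding SA_tight_def by blast
  obtain x0 where x0: "\<forall>i\<in>verts n. x0 i \<in> states d" and G0_eq: "G0 = assignment_gam n m x0"
    using integral_SA_point_eq_assignment_gam[OF G0] \<open>2 \<le> m\<close> by auto
  have "score n E th1 th2 x' \<le> score n E th1 th2 x0" if x': "\<forall>i\<in>verts n. x' i \<in> states d" for x'
    using max assignment_gam_in_SA_polytope[OF x'] G0_eq
      theta_pair_assignment_gam[OF x' edges \<open>2 \<le> m\<close>]
      theta_pair_assignment_gam[OF x0 edges \<open>2 \<le> m\<close>]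
    by metis
  then have "is_MAP n d E th1 th2 x0" using x0 by (simp add: is_MAP_def)
  moreover have "is_vertex (SA_polytope n d m) (assignment_gam n m x0)"
    using integral_SA_point_is_vertex[OF G0] G0_eq by simp
  ultimately show ?thesis
    using that max G0_eq by (simp add: cost_pair_def)
qed

lemma is_MAP_cong:
  assumes "is_MAP n d E th1 th2 x0" and edges: "E \<subseteq> {(i,j). i \<in> verts n \<and> j \<in> verts n \<and> i < j}"
    and agree: "\<forall>i\<in>verts n. x i = x0 i"
  shows "is_MAP n d E th1 th2 x"
proof -
  have "(\<Sum>(i,j)\<in>E. th2 i j (x i) (x j)) = (\<Sum>(i,j)\<in>E. th2 i j (x0 i) (x0 j))"
    using edges agree by (intro sum.cong) auto
  then have "score n E th1 th2 x = score n E th1 th2 x0"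
    using agree by (simp add: score_def)
  then show ?thesis using assms(1) agree by (simp add: is_MAP_def)
qed

section \<open>Entropy bounds\<close>

lemma card_sa_index_le:
  assumes "m \<le> n" shows "card (sa_index n m) \<le> m * n ^ m"
proof -
  have "sa_index n m = (\<Union>k\<in>{1..m}. {S. S \<subseteq> verts n \<and> card S = k})"
    by (auto simp: sa_index_def)
  then have "card (sa_index n m) \<le> (\<Sum>k\<in>{1..m}. card {S. S \<subseteq> verts n \<and> card S = k})"
    by (simp add: card_UN_le)
  also have "\<dots> = (\<Sum>k\<in>{1..m}. n choose k)"
    by (simp add: n_subsets verts_def)
  also have "\<dots> \<le> (\<Sum>k\<in>{1..m}. n ^ m)"
  proof (rule sum_mono)
    fix k assume k: "k \<in> {1..m}"
    then have "n choose k \<le> n ^ k" using assms by (intro binomial_le_pow) auto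
    also have "\<dots> \<le> n ^ m" using k assms by (intro power_increasing) auto
    finally show "n choose k \<le> n ^ m" .
  qed
  finally show ?thesis by simp
qed

lemma entropy_term_le_1:
  fixes g :: real assumes "0 \<le> g" shows "g * (- ln g + 1) \<le> 1"
proof (cases "g = 0")
  case False
  with assms have g: "0 < g" by simp
  have "ln (1 / g) \<le> 1 / g - 1" using g by (intro ln_le_minus_one) simp
  then have "g * (- ln g) \<le> g * (1 / g - 1)" using g by (intro mult_left_mono) (auto simp: ln_div)
  then show ?thesis using g by (simp add: algebra_simps)
qed simp

lemma entropy_term_nonneg:
  fixes g :: real assumes "0 \<le> g" "g \<le> 1" shows "0 \<le> g * (- ln g + 1)"
proof (cases "g = 0")
  case False
  with assms have "ln g \<le> g - 1" by (intro ln_le_minus_one) simp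
  with assms show ?thesis by simp
qed simp

lemma entropy_nonneg:
  assumes G: "G \<in> SA_polytope n d m" shows "0 \<le> entropy n d m G"
  unfolding entropy_def
  using entropy_term_nonneg[OF SA_polytope_nonneg[OF G] SA_polytope_le_1[OF G]]
  by (intro sum_nonneg)

lemma entropy_le:
  assumes G: "G \<in> SA_polytope n d m" and "m \<le> n"
  shows "entropy n d m G \<le> real m * real n ^ m * real d ^ m"
proof -
  have "entropy n d m G \<le> (\<Sum>S\<in>sa_index n m. \<Sum>y\<in>asg d S. (1::real))"
    unfolding entropy_def by (intro sum_mono entropy_term_le_1 SA_polytope_nonneg[OF G])
  also have "\<dots> = (\<Sum>S\<in>sa_index n m. real (d ^ card S))"
    by (simp add: card_asg finite_of_mem_sa_index)
  also have "\<dots> \<le> (\<Sum>S\<in>sa_index n m. real (d ^ m))"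
  proof (rule sum_mono)
    fix S assume "S \<in> sa_index n m"
    then have "1 \<le> card S" "card S \<le> m" by (auto simp: sa_index_def)
    then show "real (d ^ card S) \<le> real (d ^ m)"
      by (cases "d = 0") (auto simp: power_0_left intro: power_increasing)
  qed
  also have "\<dots> = real (card (sa_index n m)) * real d ^ m" by simp
  also have "\<dots> \<le> real m * real n ^ m * real d ^ m"
  proof (rule mult_right_mono)
    show "real (card (sa_index n m)) \<le> real m * real n ^ m"
      using card_sa_index_le[OF \<open>m \<le> n\<close>] by (metis of_nat_le_iff of_nat_mult of_nat_power)
  qed simp
  finally show ?thesis .
qed

section \<open>Concentration of the entropic minimiser\<close>

lemma card_Collect_eq_1_unique: "card {x. P x} = 1 \<Longrightarrow> P a \<Longrightarrow> P b \<Longrightarrow> a = b"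
  by (metis (mono_tags) card_1_singletonE mem_Collect_eq singletonD)

lemma states_nonempty:
  assumes "G \<in> SA_polytope n d m" "S \<in> sa_index n m" shows "1 \<le> d"
proof (rule ccontr)
  assume "\<not> 1 \<le> d"
  then have "states d = {}" by (auto simp: states_def)
  moreover have "S \<noteq> {}" using assms(2) by (auto simp: sa_index_def)
  ultimately have "asg d S = {}" by (auto simp: asg_def PiE_eq_empty_iff)
  then show False using SA_polytope_sum[OF assms] by simp
qed

lemma marginal_gt_half_argmax_unique:
  assumes G: "G \<in> SA_polytope n d m" and i: "{i} \<in> sa_index n m" and "a \<in> states d" "b \<in> states d"
    and gt_half: "1 / 2 < G {i} (\<lambda>k\<in>{i}. a)" and le: "G {i} (\<lambda>k\<in>{i}. a) \<le> G {i} (\<lambda>k\<in>{i}. b)"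
  shows "b = a"
proof (rule ccontr)
  assume "b \<noteq> a"
  then have "(\<lambda>k\<in>{i}. a) \<noteq> (\<lambda>k\<in>{i}. b)" by (metis restrict_apply' singletonI)
  moreover have "(\<lambda>k\<in>{i}. a) \<in> asg d {i}" "(\<lambda>k\<in>{i}. b) \<in> asg d {i}"
    using \<open>a \<in> states d\<close> \<open>b \<in> states d\<close> by (auto simp: asg_def)
  ultimately have "(\<Sum>y\<in>{\<lambda>k\<in>{i}. a, \<lambda>k\<in>{i}. b}. G {i} y) \<le> (\<Sum>y\<in>asg d {i}. G {i} y)"
    using SA_polytope_nonneg[OF G] by (intro sum_mono2[OF finite_asg_sa_index[OF i]]) auto
  with \<open>(\<lambda>k\<in>{i}. a) \<noteq> (\<lambda>k\<in>{i}. b)\<close>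
  have "G {i} (\<lambda>k\<in>{i}. a) + G {i} (\<lambda>k\<in>{i}. b) \<le> 1"
    using SA_polytope_sum[OF G i] by simp
  with gt_half le show False by simp
qed

lemma marginal_deficit_le_cost_gap:
  assumes aff: "gam_affine c" and V0: "V0 {i} w = 1"
    and gap: "\<And>V. is_vertex (SA_polytope n d m) V \<Longrightarrow> V \<noteq> V0 \<Longrightarrow> 1 \<le> \<mu> * (c V - c V0)"
    and G: "G \<in> SA_polytope n d m"
  shows "1 - G {i} w \<le> \<mu> * (c G - c V0)"
proof -
  define f where "f H = \<mu> * (c H - c V0) - (1 - H {i} w)" for H
  have "gam_affine f" unfolding gam_affine_def
  proof (intro allI)
    fix H a b s
    have c_shift: "c (gam_shift H a b s) = c H + s * (c a - c b)"
      using aff by (simp add: gam_affine_def)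
    have eval_shift: "gam_shift H a b s {i} w = H {i} w + s * (a {i} w - b {i} w)"
      by (simp add: gam_shift_def)
    show "f (gam_shift H a b s) = f H + s * (f a - f b)"
      unfolding f_def c_shift eval_shift by (simp add: algebra_simps)
  qed
  moreover have "0 \<le> f V" if "is_vertex (SA_polytope n d m) V" for V
  proof (cases "V = V0")
    case False
    then show ?thesis
      using gap[OF that False] SA_polytope_nonneg[OF is_vertex_imp_mem[OF that], of "{i}" w]
      by (simp add: f_def)
  qed (simp add: f_def V0)
  ultimately have "0 \<le> f G" by (rule nonneg_on_vertices_imp_nonneg[OF _ _ G])
  then show ?thesis by (simp add: f_def)
qed

lemma Min_vertex_cost_gap:
  fixes P :: "gam set" and c :: "gam \<Rightarrow> real"
  assumes fin: "finite {V. is_vertex P V}"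
    and V0: "is_vertex P V0" "\<forall>\<Gamma>\<in>P. c V0 \<le> c \<Gamma>"
    and V: "is_vertex P V" "\<not> (\<forall>\<Gamma>\<in>P. c V \<le> c \<Gamma>)"
  shows "0 < Min {c V1 - c V2 | V1 V2. is_vertex P V1 \<and> \<not> (\<forall>\<Gamma>\<in>P. c V1 \<le> c \<Gamma>) \<and>
      is_vertex P V2 \<and> (\<forall>\<Gamma>\<in>P. c V2 \<le> c \<Gamma>)}"
    and "\<And>W. is_vertex P W \<Longrightarrow> \<not> (\<forall>\<Gamma>\<in>P. c W \<le> c \<Gamma>) \<Longrightarrow>
      Min {c V1 - c V2 | V1 V2. is_vertex P V1 \<and> \<not> (\<forall>\<Gamma>\<in>P. c V1 \<le> c \<Gamma>) \<and>
        is_vertex P V2 \<and> (\<forall>\<Gamma>\<in>P. c V2 \<le> c \<Gamma>)} \<le> c W - c V0"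
proof -
  let ?D = "{c V1 - c V2 | V1 V2. is_vertex P V1 \<and> \<not> (\<forall>\<Gamma>\<in>P. c V1 \<le> c \<Gamma>) \<and>
    is_vertex P V2 \<and> (\<forall>\<Gamma>\<in>P. c V2 \<le> c \<Gamma>)}"
  have "?D \<subseteq> (\<lambda>(V1, V2). c V1 - c V2) ` ({V. is_vertex P V} \<times> {V. is_vertex P V})"
    by auto
  then have finD: "finite ?D" by (rule finite_subset) (simp add: fin)
  have gap_in: "c W - c V0 \<in> ?D" if "is_vertex P W" "\<not> (\<forall>\<Gamma>\<in>P. c W \<le> c \<Gamma>)" for W
    using that V0 by blast
  then show "Min ?D \<le> c W - c V0" if "is_vertex P W" "\<not> (\<forall>\<Gamma>\<in>P. c W \<le> c \<Gamma>)" for W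
    using finD that by simp
  have "Min ?D \<in> ?D" using finD gap_in[OF V] by (intro Min_in) auto
  moreover have "0 < e" if "e \<in> ?D" for e
    using that by (force simp: not_le)
  ultimately show "0 < Min ?D" by blast
qed

lemma entropy_threshold_exceeds_twice_bound:
  fixes m n d :: nat and \<eta> \<Delta> :: real
  assumes "1 \<le> m" "1 \<le> n" "1 \<le> d" "0 < \<Delta>"
    and "(ln (8 * m * n ^ m * d ^ m) + 2 * m * n ^ m * d ^ m) / \<Delta> \<le> \<eta>"
  shows "2 * (real m * real n ^ m * real d ^ m) < \<eta> * \<Delta>"
proof -
  define R where "R = real m * real n ^ m * real d ^ m"
  have "0 < m * n ^ m * d ^ m" using assms(1-3) by simp
  then have "1 \<le> R" unfolding R_def
    by (metis One_nat_def Suc_leI of_nat_1 of_nat_le_iff of_nat_mult of_nat_power)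
  then have "2 * R < ln (8 * R) + 2 * R"
    \<comment> \<open>only the positivity of the logarithmic term is needed\<close>
    by simp
  also have "ln (8 * R) + 2 * R \<le> \<eta> * \<Delta>"
    using assms(4,5) by (simp add: R_def mult.assoc pos_divide_le_eq)
  finally show ?thesis by (simp add: R_def)
qed

lemma regularized_minimizer_concentrates:
  assumes aff: "gam_affine c" and V0: "V0 \<in> SA_polytope n d m" "V0 {i} w = 1"
    and gap: "\<And>V. is_vertex (SA_polytope n d m) V \<Longrightarrow> V \<noteq> V0 \<Longrightarrow> \<Delta> \<le> c V - c V0"
    and "0 < \<Delta>" and eta: "2 * (real m * real n ^ m * real d ^ m) < \<eta> * \<Delta>" and "m \<le> n"
    and Gs: "Gs \<in> SA_polytope n d m"
    and Gs_min: "c Gs - (1 / \<eta>) * entropy n d m Gs \<le> c V0 - (1 / \<eta>) * entropy n d m V0"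
  shows "1 / 2 < Gs {i} w"
proof -
  define R where "R = real m * real n ^ m * real d ^ m"
  have "0 \<le> R" by (simp add: R_def)
  with eta have "0 < \<eta> * \<Delta>" unfolding R_def by linarith
  with \<open>0 < \<Delta>\<close> have "0 < \<eta>" by (simp add: zero_less_mult_iff)
  have scaled_gap: "1 \<le> (1 / \<Delta>) * (c V - c V0)"
    if "is_vertex (SA_polytope n d m) V" "V \<noteq> V0" for V
    using gap[OF that] \<open>0 < \<Delta>\<close> by (simp add: field_simps)
  have "1 - Gs {i} w \<le> (1 / \<Delta>) * (c Gs - c V0)"
    by (rule marginal_deficit_le_cost_gap[of c V0, OF aff V0(2) scaled_gap Gs])
  then have "\<Delta> * (1 - Gs {i} w) \<le> c Gs - c V0"
    using \<open>0 < \<Delta>\<close> by (simp add: field_simps)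
  then have "\<eta> * \<Delta> * (1 - Gs {i} w) \<le> \<eta> * (c Gs - c V0)"
    using \<open>0 < \<eta>\<close> by (simp add: mult.assoc)
  also have "\<dots> \<le> entropy n d m Gs - entropy n d m V0"
    using mult_left_mono[OF Gs_min, of \<eta>] \<open>0 < \<eta>\<close> by (simp add: right_diff_distrib)
  also have "\<dots> \<le> R"
    using entropy_le[OF Gs \<open>m \<le> n\<close>] entropy_nonneg[OF V0(1)] by (simp add: R_def)
  finally have deficit_bound: "\<eta> * \<Delta> * (1 - Gs {i} w) \<le> R" .
  show ?thesis
  proof (rule ccontr)
    assume "\<not> 1 / 2 < Gs {i} w"
    then have "\<eta> * \<Delta> * (1 / 2) \<le> \<eta> * \<Delta> * (1 - Gs {i} w)"
      using \<open>0 < \<eta> * \<Delta>\<close> by (intro mult_left_mono) auto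
    with deficit_bound eta show False by (simp add: R_def)
  qed
qed

lemma entropic_minimizer_concentrates:
  fixes m n d :: nat and c :: "gam \<Rightarrow> real"
  assumes aff: "gam_affine c" and "1 \<le> m" "m \<le> n" and i: "i \<in> verts n"
    and V0: "is_vertex (SA_polytope n d m) V0" "\<forall>\<Gamma>\<in>SA_polytope n d m. c V0 \<le> c \<Gamma>"
      "V0 {i} w = 1"
    and unique: "\<And>V. is_vertex (SA_polytope n d m) V \<Longrightarrow>
      \<forall>\<Gamma>\<in>SA_polytope n d m. c V \<le> c \<Gamma> \<Longrightarrow> V = V0"
    and eta: "\<eta> \<ge> (ln (8 * m * n ^ m * d ^ m) + 2 * m * n ^ m * d ^ m) /
        Min {c V1 - c V2 | V1 V2.
               is_vertex (SA_polytope n d m) V1 \<and> \<not> (\<forall>\<Gamma>\<in>SA_polytope n d m. c V1 \<le> c \<Gamma>) \<and>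
               is_vertex (SA_polytope n d m) V2 \<and> (\<forall>\<Gamma>\<in>SA_polytope n d m. c V2 \<le> c \<Gamma>)}"
    and Gs: "Gs \<in> SA_polytope n d m"
    and Gs_min: "\<forall>\<Gamma>\<in>SA_polytope n d m.
        c Gs - (1 / \<eta>) * entropy n d m Gs \<le> c \<Gamma> - (1 / \<eta>) * entropy n d m \<Gamma>"
  shows "1 / 2 < Gs {i} w"
proof (cases "\<exists>V. is_vertex (SA_polytope n d m) V \<and> V \<noteq> V0")
  case False
  then have "1 \<le> 0 * (c V - c V0)" if "is_vertex (SA_polytope n d m) V" "V \<noteq> V0" for V
    using that by blast
  from marginal_deficit_le_cost_gap[of c V0, OF aff V0(3) this Gs] show ?thesis by simp
next
  case True
  then obtain V where V: "is_vertex (SA_polytope n d m) V" "V \<noteq> V0" by blast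
  with unique have "\<not> (\<forall>\<Gamma>\<in>SA_polytope n d m. c V \<le> c \<Gamma>)" by blast
  note gap = Min_vertex_cost_gap[OF finite_vertices V0(1,2) V(1) this]
  have "1 \<le> n" "1 \<le> d"
    using i states_nonempty[OF Gs singleton_in_sa_index[OF i \<open>1 \<le> m\<close>]] by (auto simp: verts_def)
  note threshold = entropy_threshold_exceeds_twice_bound[OF \<open>1 \<le> m\<close> this gap(1) eta]
  show ?thesis
    using regularized_minimizer_concentrates[of c V0,
        OF aff is_vertex_imp_mem[OF V0(1)] V0(3) _ gap(1) threshold]
      gap(2) unique \<open>m \<le> n\<close> Gs Gs_min is_vertex_imp_mem[OF V0(1)] by blast
qed

theorem corollary1:
  fixes n d m :: nat and E :: "(nat \<times> nat) set"
    and th1 :: "nat \<Rightarrow> nat \<Rightarrow> real" and th2 :: "nat \<Rightarrow> nat \<Rightarrow> nat \<Rightarrow> nat \<Rightarrow> real"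
    and \<eta> :: real and \<Gamma>s :: gam and x :: "nat \<Rightarrow> nat"
  assumes edges: "E \<subseteq> {(i,j). i \<in> verts n \<and> j \<in> verts n \<and> i < j}"
    and covered: "\<forall>i\<in>verts n. \<exists>j. (i,j) \<in> E \<or> (j,i) \<in> E"
    and m2: "2 \<le> m" and mn: "m \<le> n"
    and tight: "SA_tight n d m E th1 th2"
    and unique: "card {V. is_vertex (SA_polytope n d m) V \<and>
        (\<forall>\<Gamma>\<in>SA_polytope n d m. cost_pair n d E th1 th2 V \<le> cost_pair n d E th1 th2 \<Gamma>)} = 1"
    and eta: "\<eta> \<ge> (ln (8 * m * n ^ m * d ^ m) + 2 * m * n ^ m * d ^ m) /
        Min {cost_pair n d E th1 th2 V1 - cost_pair n d E th1 th2 V2 | V1 V2.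
               is_vertex (SA_polytope n d m) V1 \<and>
               \<not> (\<forall>\<Gamma>\<in>SA_polytope n d m. cost_pair n d E th1 th2 V1 \<le> cost_pair n d E th1 th2 \<Gamma>) \<and>
               is_vertex (SA_polytope n d m) V2 \<and>
               (\<forall>\<Gamma>\<in>SA_polytope n d m. cost_pair n d E th1 th2 V2 \<le> cost_pair n d E th1 th2 \<Gamma>)}"
    and Gs_mem: "\<Gamma>s \<in> SA_polytope n d m"
    and Gs_min: "\<forall>\<Gamma>\<in>SA_polytope n d m.
        cost_pair n d E th1 th2 \<Gamma>s - (1 / \<eta>) * entropy n d m \<Gamma>s
          \<le> cost_pair n d E th1 th2 \<Gamma> - (1 / \<eta>) * entropy n d m \<Gamma>"
    and x_argmax: "\<forall>i\<in>verts n. x i \<in> states d \<and>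
        (\<forall>x'\<in>states d. \<Gamma>s {i} (\<lambda>k\<in>{i}. x') \<le> \<Gamma>s {i} (\<lambda>k\<in>{i}. x i))"
  shows "is_MAP n d E th1 th2 x"
proof -
  obtain x0 where MAP: "is_MAP n d E th1 th2 x0"
    and V0: "is_vertex (SA_polytope n d m) (assignment_gam n m x0)"
      "\<forall>\<Gamma>\<in>SA_polytope n d m.
        cost_pair n d E th1 th2 (assignment_gam n m x0) \<le> cost_pair n d E th1 th2 \<Gamma>"
    using MAP_of_tight[OF tight edges m2] by blast
  have only_optimal: "V = assignment_gam n m x0" if "is_vertex (SA_polytope n d m) V"
    "\<forall>\<Gamma>\<in>SA_polytope n d m. cost_pair n d E th1 th2 V \<le> cost_pair n d E th1 th2 \<Gamma>" for V
    using card_Collect_eq_1_unique[OF unique] that V0 by blast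
  have "x i = x0 i" if i: "i \<in> verts n" for i
  proof -
    have x0: "x0 i \<in> states d" using MAP i by (simp add: is_MAP_def)
    have "1 / 2 < \<Gamma>s {i} (\<lambda>k\<in>{i}. x0 i)"
      using m2 by (intro entropic_minimizer_concentrates[where Gs = \<Gamma>s and w = "\<lambda>k\<in>{i}. x0 i",
          OF gam_affine_cost_pair _ mn i V0 _ only_optimal eta Gs_mem Gs_min])
        (simp_all add: assignment_gam_singleton i)
    with x_argmax i x0 show ?thesis
      using marginal_gt_half_argmax_unique[OF Gs_mem singleton_in_sa_index[OF i] x0] m2 by simp
  qed
  then show ?thesis by (rule is_MAP_cong[OF MAP edges, rule_format])
qed

end
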